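(* Let $d\ge 1$, $\sigma>0$, $A\in\mathbb{R}^{d\times d}$ symmetric positive definite, $\theta \in \mathbb{R}^d\setminus\{0\}$, and let $N_e$ be a positive integer multiple of $d$. Suppose $x_1,\dots,x_{N_e}$ are deterministic actions obtained by round-robin exploration (playing $A^{1/2}e_j$ with $j$ cycling through $1,\dots,d$, so each is played $N_e/d$ times), and $y_t = x_t^\top\theta + z_t$ where the $z_t$ are independent, centered and $\sigma^2$-subgaussian. Let $X \in \mathbb{R}^{N_e\times d}$ have rows $x_t^\top$, $Y = (y_t)_t$, and $\hat\theta = (X^\top X)^{-1}X^\top Y$. Then, with $x^\star(u) := Au/\|u\|_A$ for $u\ne 0$ (and $x^\star(0)$ any point of $\{x:\|x\|_{A^{-1}}\le 1\}$), $$\mathbb{E}\big[\theta^\top\big(x^\star(\theta) - x^\star(\hat\theta)\big)\big] \le \frac{d^2\sigma^2}{\|\theta\|_A N_e} + 2\|\theta\|_A\, \exp\Big( \big(2d/3 - N_e\|\theta\|_A^2/(3\sigma^2 d)\big)^- \Big).$$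
   Context: $\|u\|_M := \sqrt{u^\top M u}$ for symmetric positive definite $M$; $e_1,\dots,e_d$ is the standard basis of $\mathbb{R}^d$; $A^{1/2}$ is the symmetric positive definite square root. A centered random variable $z$ is $\sigma^2$-subgaussian if $\mathbb{E}[e^{\lambda z}]\le e^{\lambda^2\sigma^2/2}$ for all $\lambda\in\mathbb{R}$. For real $x$, $(x)^- := \min(x,0)$. Note that with round-robin exploration $X^\top X = (N_e/d)A$. The vector $x^\star(u)$ maximizes $x^\top u$ over the centered ellipsoid $\{x:\|x\|_{A^{-1}}\le 1\}$. *)

theory Defs
  imports "HOL-Analysis.Analysis" "HOL-Probability.Probability"
begin

definition sym_mat :: "real^'n^'n \<Rightarrow> bool" where
  "sym_mat A \<longleftrightarrow> transpose A = A"

definition pos_def :: "real^'n^'n \<Rightarrow> bool" where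
  "pos_def A \<longleftrightarrow> sym_mat A \<and> (\<forall>x. x \<noteq> 0 \<longrightarrow> x \<bullet> (A *v x) > 0)"

definition mat_sqrt :: "real^'n^'n \<Rightarrow> real^'n^'n" where
  "mat_sqrt A = (THE S. pos_def S \<and> S ** S = A)"

definition wnorm :: "real^'n^'n \<Rightarrow> real^'n \<Rightarrow> real" where
  "wnorm M u = sqrt (u \<bullet> (M *v u))"

definition negpart :: "real \<Rightarrow> real" where
  "negpart x = min x 0"

text \<open>Maximiser over the ellipsoid; \<open>x0\<close> is the (arbitrary) value chosen at 0.\<close>
definition xstar :: "real^'n^'n \<Rightarrow> real^'n \<Rightarrow> real^'n \<Rightarrow> real^'n" where
  "xstar A x0 u = (if u = 0 then x0 else (1 / wnorm A u) *\<^sub>R (A *v u))"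

definition outer :: "real^'n \<Rightarrow> real^'n^'n" where
  "outer x = (\<chi> i j. x $ i * x $ j)"

text \<open>Least squares estimate \<open>(X^T X)^{-1} X^T Y\<close> for actions \<open>x 0..x (N-1)\<close>
  (rows of X) and responses \<open>y\<close>: \<open>X^T X = \<Sum>_t x_t x_t^T\<close>, \<open>X^T Y = \<Sum>_t y_t x_t\<close>.\<close>
definition ols :: "nat \<Rightarrow> (nat \<Rightarrow> real^'n) \<Rightarrow> (nat \<Rightarrow> real) \<Rightarrow> real^'n" where
  "ols N x y = matrix_inv (\<Sum>t<N. outer (x t)) *v (\<Sum>t<N. y t *\<^sub>R x t)"

definition subgaussian :: "'a measure \<Rightarrow> real \<Rightarrow> ('a \<Rightarrow> real) \<Rightarrow> bool" where
  "subgaussian M s2 Z \<longleftrightarrow>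
     (\<forall>l::real. integrable M (\<lambda>w. exp (l * Z w)) \<and>
        (\<integral>w. exp (l * Z w) \<partial>M) \<le> exp (l\<^sup>2 * s2 / 2))"

end

theory Submission
  imports Defs
begin

text \<open>Whitening by \<open>A\<^sup>1\<^sup>/\<^sup>2\<close> turns the ellipsoid into the unit ball: with \<open>u = A\<^sup>1\<^sup>/\<^sup>2 \<theta>\<close> and
  \<open>v = A\<^sup>1\<^sup>/\<^sup>2 \<theta>'\<close>, the regret of \<open>x\<^sup>\<star>(\<theta>')\<close> is \<open>\<parallel>u\<parallel> - u\<bullet>v/\<parallel>v\<parallel>\<close>. Since round-robin exploration gives
  \<open>X\<^sup>TX = (N\<^sub>e/d) A\<close>, the estimate satisfies \<open>v = u + \<xi>\<close>, where coordinate \<open>i\<close> of \<open>\<xi>\<close> is the average of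
  the \<open>N\<^sub>e/d\<close> noise terms observed along direction \<open>i\<close>. The regret is at most \<open>\<parallel>\<xi>\<parallel>\<^sup>2/\<parallel>u\<parallel>\<close> when
  \<open>\<parallel>\<xi>\<parallel> < \<parallel>u\<parallel>\<close> and at most \<open>2\<parallel>u\<parallel>\<close> always. Independence gives \<open>E\<parallel>\<xi>\<parallel>\<^sup>2 \<le> d\<^sup>2\<sigma>\<^sup>2/N\<^sub>e\<close>, and
  \<open>P(\<parallel>\<xi>\<parallel> \<ge> \<parallel>u\<parallel>)\<close> follows from a Chernoff bound on \<open>e\<^bsup>\<beta>\<parallel>\<xi>\<parallel>\<^sup>2\<^esup>\<close>, whose expectation factorises
  over the \<open>d\<close> independent coordinates, each factor being at most \<open>\<surd>3\<close> by the sub-Gaussian bound.\<close>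

section \<open>Symmetric and positive definite matrices\<close>

lemma sym_mat_inner_mv:
  fixes A :: "real^'n^'n"
  assumes "sym_mat A"
  shows "x \<bullet> (A *v y) = (A *v x) \<bullet> y"
proof -
  have "x \<bullet> (A *v y) = (x v* A) \<bullet> y" by (simp add: dot_lmul_matrix)
  also have "x v* A = transpose A *v x" by simp
  also have "transpose A *v x = A *v x" using assms by (simp add: sym_mat_def)
  finally show ?thesis .
qed

lemma inner_axis_mv_axis: "axis i 1 \<bullet> ((X::real^'n^'m) *v axis j 1) = X $ i $ j"
  by (simp add: inner_axis' matrix_vector_mult_basis column_def)

lemma sym_matI:
  fixes S :: "real^'n^'n"
  assumes "\<And>x y. y \<bullet> (S *v x) = x \<bullet> (S *v y)"
  shows "sym_mat S"
  using assms[of "axis _ 1" "axis _ 1"]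
  by (simp add: sym_mat_def vec_eq_iff transpose_def inner_axis_mv_axis)

lemma pos_def_mv_eq_0_iff:
  fixes S :: "real^'n^'n"
  assumes "pos_def S"
  shows "S *v x = 0 \<longleftrightarrow> x = 0"
  using assms unfolding pos_def_def by (metis inner_zero_right less_irrefl matrix_vector_mult_0_right)

lemma matrix_eq_on_spanning_set:
  fixes M N :: "real^'n^'m"
  assumes "span B = UNIV" and "\<And>b. b \<in> B \<Longrightarrow> M *v b = N *v b"
  shows "M = N"
proof -
  have "M *v x = N *v x" for x
    using real_vector.linear_eq_on_span[OF matrix_vector_mul_linear matrix_vector_mul_linear, of B M N x]
      assms by auto
  then show ?thesis by (simp add: matrix_eq)
qed

lemma rayleigh_max_inner_mv_eq_0:
  fixes A :: "real^'n^'n"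
  assumes sym: "sym_mat A" and V: "subspace V"
    and max: "\<And>y. y \<in> V \<Longrightarrow> y \<bullet> (A *v y) \<le> l * (y \<bullet> y)"
    and v: "v \<in> V" "v \<bullet> v = 1" "v \<bullet> (A *v v) = l"
    and w: "w \<in> V" "w \<bullet> v = 0"
  shows "w \<bullet> (A *v v) = 0"
proof (rule ccontr)
  define a where "a = w \<bullet> (A *v v)"
  define K where "K = l * (w \<bullet> w) - w \<bullet> (A *v w)"
  assume "w \<bullet> (A *v v) \<noteq> 0"
  then have a: "a * a > 0" unfolding a_def using not_real_square_gt_zero by blast
  have perturb: "2 * t * a \<le> t\<^sup>2 * K" for t
  proof -
    have "v + t *\<^sub>R w \<in> V" using V v w by (simp add: subspace_add subspace_mul)
    from max[OF this] have "l + 2 * t * a + t\<^sup>2 * (w \<bullet> (A *v w)) \<le> l * (1 + t\<^sup>2 * (w \<bullet> w))"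
      using sym_mat_inner_mv[OF sym, of v w] v w
      by (simp add: matrix_vector_right_distrib inner_add_left inner_add_right a_def power2_eq_square
          algebra_simps inner_commute)
    then show ?thesis by (simp add: K_def algebra_simps)
  qed
  \<comment> \<open>For small \<open>t\<close> of the sign of \<open>a\<close>, \<open>v + t w\<close> would beat the maximiser \<open>v\<close>.\<close>
  define s where "s = 1 / (\<bar>K\<bar> + 1)"
  have s: "s > 0" "s * K < 2" unfolding s_def by (auto simp: field_simps abs_if)
  from perturb[of "a * s"] have "(a * a * s) * 2 \<le> (a * a * s) * (s * K)"
    by (simp add: power2_eq_square algebra_simps)
  then have "2 \<le> s * K" using a s by (simp add: mult_le_cancel_left_pos)
  with s show False by simp
qed

lemma sym_mat_invariant_subspace_eigenvector:
  fixes A :: "real^'n^'n"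
  assumes sym: "sym_mat A" and V: "subspace V" and inv: "\<And>x. x \<in> V \<Longrightarrow> A *v x \<in> V"
    and nontriv: "x0 \<in> V" "x0 \<noteq> 0"
  obtains v where "v \<in> V" "norm v = 1" "A *v v = (v \<bullet> (A *v v)) *\<^sub>R v"
proof -
  define S where "S = V \<inter> sphere 0 1"
  have "compact S" unfolding S_def
    by (metis compact_Int_closed compact_sphere closed_subspace V Int_commute)
  moreover have "(1 / norm x0) *\<^sub>R x0 \<in> S" using nontriv V by (simp add: S_def subspace_mul)
  moreover have "continuous_on S (\<lambda>y. y \<bullet> (A *v y))" by (intro continuous_intros)
  ultimately obtain v where v: "v \<in> S" and vmax: "\<And>y. y \<in> S \<Longrightarrow> y \<bullet> (A *v y) \<le> v \<bullet> (A *v v)"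
    using continuous_attains_sup[of S "\<lambda>y. y \<bullet> (A *v y)"] by blast
  define l where "l = v \<bullet> (A *v v)"
  have vV: "v \<in> V" and vn: "norm v = 1" using v by (auto simp: S_def)
  have vv: "v \<bullet> v = 1" using vn by (simp add: norm_eq_1)
  have maxV: "y \<bullet> (A *v y) \<le> l * (y \<bullet> y)" if y: "y \<in> V" for y
  proof (cases "y = 0")
    case False
    have "(1 / norm y) *\<^sub>R y \<in> S" using y False V by (simp add: S_def subspace_mul)
    from vmax[OF this] have "(y \<bullet> (A *v y)) / (norm y)\<^sup>2 \<le> l"
      by (simp add: l_def matrix_vector_mult_scaleR power2_eq_square)
    then show ?thesis using False by (simp add: divide_le_eq power2_norm_eq_inner)
  qed simp
  define r where "r = A *v v - l *\<^sub>R v"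
  have rV: "r \<in> V" unfolding r_def using inv[OF vV] vV V by (simp add: subspace_diff subspace_mul)
  have rv: "r \<bullet> v = 0" unfolding r_def using vv
    by (simp add: inner_diff_left inner_diff_right l_def inner_commute)
  have "r \<bullet> (A *v v) = 0"
    by (rule rayleigh_max_inner_mv_eq_0[OF sym V maxV vV vv l_def[symmetric] rV rv])
  then have "r \<bullet> r = 0" using rv unfolding r_def by (simp add: inner_diff_right)
  then have "A *v v = l *\<^sub>R v" by (simp add: r_def)
  then show ?thesis using that vV vn l_def by blast
qed

lemma sym_mat_eigenvector_orthogonal:
  fixes A :: "real^'n^'n"
  assumes "sym_mat A" "A *v v = l *\<^sub>R v" "w \<bullet> v = 0"
  shows "(A *v w) \<bullet> v = 0"
  using sym_mat_inner_mv[OF assms(1), of w v] assms(2,3) by simp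

lemma subspace_subset_span_insert_orthogonal:
  fixes v :: "'a::real_inner"
  assumes V: "subspace V" and v: "v \<in> V" "v \<bullet> v = 1" and W: "{w \<in> V. w \<bullet> v = 0} \<subseteq> span B"
  shows "V \<subseteq> span (insert v B)"
proof
  fix x assume x: "x \<in> V"
  have "x - (x \<bullet> v) *\<^sub>R v \<in> span B"
    using x v V W by (auto simp: subspace_diff subspace_mul inner_diff_left)
  then have "x - (x \<bullet> v) *\<^sub>R v \<in> span (insert v B)" using span_mono[of B "insert v B"] by blast
  moreover have "(x \<bullet> v) *\<^sub>R v \<in> span (insert v B)" by (simp add: span_base span_mul)
  ultimately show "x \<in> span (insert v B)" using span_add by fastforce
qed

lemma sym_mat_invariant_subspace_eigenbasis:
  fixes A :: "real^'n^'n"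
  assumes sym: "sym_mat A"
  shows "subspace V \<Longrightarrow> (\<And>x. x \<in> V \<Longrightarrow> A *v x \<in> V) \<Longrightarrow> \<exists>B. B \<subseteq> V \<and> pairwise orthogonal B
    \<and> (\<forall>b\<in>B. norm b = 1 \<and> A *v b = (b \<bullet> (A *v b)) *\<^sub>R b) \<and> V \<subseteq> span B"
proof (induction "dim V" arbitrary: V rule: less_induct)
  case less
  note V = less.prems(1) and inv = less.prems(2)
  show ?case
  proof (cases "V \<subseteq> {0}")
    case True
    then show ?thesis by (intro exI[of _ "{}"]) auto
  next
    case False
    then obtain x0 where "x0 \<in> V" "x0 \<noteq> 0" by auto
    then obtain v where vV: "v \<in> V" and vn: "norm v = 1" and eig: "A *v v = (v \<bullet> (A *v v)) *\<^sub>R v"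
      using sym_mat_invariant_subspace_eigenvector[OF sym V inv] by blast
    have vv: "v \<bullet> v = 1" using vn by (simp add: norm_eq_1)
    define W where "W = {w \<in> V. w \<bullet> v = 0}"
    have W: "subspace W" using V unfolding W_def subspace_def by (auto simp: inner_add_left)
    have invW: "A *v w \<in> W" if "w \<in> W" for w
      using inv sym_mat_eigenvector_orthogonal[OF sym eig] that by (simp add: W_def)
    have "v \<notin> W" using vv by (simp add: W_def)
    then have "W \<subset> V" using vV unfolding W_def by blast
    then have "dim W < dim V" using dim_psubset W V span_eq_iff by metis
    from less.hyps[OF this W invW] obtain B where B: "B \<subseteq> W" "pairwise orthogonal B"
        "\<forall>b\<in>B. norm b = 1 \<and> A *v b = (b \<bullet> (A *v b)) *\<^sub>R b" "W \<subseteq> span B"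
      by blast
    have "pairwise orthogonal (insert v B)"
      using B(1,2) by (intro pairwise_orthogonal_insert) (auto simp: W_def orthogonal_def inner_commute)
    moreover have "V \<subseteq> span (insert v B)"
      using subspace_subset_span_insert_orthogonal[OF V vV vv] B(4) by (simp add: W_def)
    ultimately show ?thesis using B(1,3) vV vn eig unfolding W_def
      by (intro exI[of _ "insert v B"]) blast
  qed
qed

definition orthonormal :: "'a::real_inner set \<Rightarrow> bool" where
  "orthonormal B \<longleftrightarrow> (\<forall>b\<in>B. \<forall>c\<in>B. b \<bullet> c = (if b = c then 1 else 0))"

lemma orthonormalD: "orthonormal B \<Longrightarrow> b \<in> B \<Longrightarrow> c \<in> B \<Longrightarrow> b \<bullet> c = (if b = c then 1 else 0)"
  by (simp add: orthonormal_def)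

lemma sym_mat_orthonormal_eigenbasis:
  fixes A :: "real^'n^'n"
  assumes "sym_mat A"
  obtains B lam where "finite B" "orthonormal B"
    "\<And>b. b \<in> B \<Longrightarrow> A *v b = lam b *\<^sub>R b" "span B = UNIV"
proof -
  obtain B where B: "pairwise orthogonal B" "\<forall>b\<in>B. norm b = 1 \<and> A *v b = (b \<bullet> (A *v b)) *\<^sub>R b"
      "UNIV \<subseteq> span B"
    using sym_mat_invariant_subspace_eigenbasis[OF assms subspace_UNIV] by blast
  have "orthonormal B"
    using B(1,2) by (auto simp: orthonormal_def pairwise_def orthogonal_def norm_eq_1)
  moreover have "finite B" using B(1) pairwise_orthogonal_imp_finite by blast
  ultimately show thesis using that[of B "\<lambda>b. b \<bullet> (A *v b)"] B(2,3) by blast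
qed

lemma pos_def_eigenvalue_pos:
  fixes A :: "real^'n^'n"
  assumes "pos_def A" "A *v b = l *\<^sub>R b" "b \<noteq> 0"
  shows "l > 0"
proof -
  have "0 < b \<bullet> (A *v b)" using assms(1,3) unfolding pos_def_def by blast
  then have "0 < l * (b \<bullet> b)" using assms(2) by simp
  then show ?thesis using inner_ge_zero[of b] by (auto simp: zero_less_mult_iff)
qed

lemma orthonormal_inner_sum:
  fixes B :: "'a::real_inner set"
  assumes "finite B" "orthonormal B" "c \<in> B"
  shows "c \<bullet> (\<Sum>b\<in>B. f b *\<^sub>R b) = f c"
proof -
  have "c \<bullet> (\<Sum>b\<in>B. f b *\<^sub>R b) = (\<Sum>b\<in>B. if b = c then f c else 0)"
    using assms(2,3) by (auto simp: inner_sum_right orthonormalD intro!: sum.cong)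
  then show ?thesis using assms(1,3) by simp
qed

lemma orthonormal_span_expansion:
  fixes B :: "'a::real_inner set"
  assumes fin: "finite B" and orth: "orthonormal B"
    and x: "x \<in> span B"
  shows "x = (\<Sum>b\<in>B. (b \<bullet> x) *\<^sub>R b)"
proof -
  define y where "y = x - (\<Sum>b\<in>B. (b \<bullet> x) *\<^sub>R b)"
  have "y \<in> span B" unfolding y_def by (intro span_diff x span_sum span_mul span_base)
  moreover have "orthogonal y c" if "c \<in> B" for c
    using orthonormal_inner_sum[OF fin orth that, of "\<lambda>b. b \<bullet> x"] unfolding y_def orthogonal_def
    by (simp add: inner_diff_right inner_commute)
  ultimately have "orthogonal y y" using orthogonal_to_span by blast
  then show ?thesis by (simp add: y_def orthogonal_def)
qed

lemma orthonormal_spanning_inner_nonzero: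
  fixes B :: "'a::real_inner set"
  assumes "finite B" "orthonormal B"
    and "span B = UNIV" "x \<noteq> 0"
  obtains c where "c \<in> B" "c \<bullet> x \<noteq> 0"
proof -
  have "x = (\<Sum>b\<in>B. (b \<bullet> x) *\<^sub>R b)" using orthonormal_span_expansion[OF assms(1,2)] assms(3) by blast
  then show thesis using that assms(4) by (metis (no_types, lifting) scaleR_eq_0_iff sum.neutral)
qed

lemma orthonormal_diagonal_matrix:
  fixes B :: "(real^'n) set" and g :: "real^'n \<Rightarrow> real"
  assumes fin: "finite B" and orth: "orthonormal B"
    and S: "S = matrix (\<lambda>x. \<Sum>b\<in>B. (g b * (b \<bullet> x)) *\<^sub>R b)"
  shows "\<And>c. c \<in> B \<Longrightarrow> S *v c = g c *\<^sub>R c"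
    and "sym_mat S"
    and "\<And>x. x \<bullet> (S *v x) = (\<Sum>b\<in>B. g b * (b \<bullet> x)\<^sup>2)"
proof -
  have "linear (\<lambda>x. \<Sum>b\<in>B. (g b * (b \<bullet> x)) *\<^sub>R b)"
    by (rule linearI) (simp_all add: inner_add_right distrib_left scaleR_add_left sum.distrib
        scaleR_sum_right mult.left_commute)
  then have Sx: "S *v x = (\<Sum>b\<in>B. (g b * (b \<bullet> x)) *\<^sub>R b)" for x unfolding S by (simp add: matrix_works)
  show "S *v c = g c *\<^sub>R c" if c: "c \<in> B" for c
  proof -
    have "S *v c = (\<Sum>b\<in>B. (if b = c then g c else 0) *\<^sub>R b)"
      unfolding Sx using c by (intro sum.cong) (auto simp: orthonormalD[OF orth])
    then show ?thesis using fin c by (simp add: if_distrib[of "\<lambda>a. a *\<^sub>R _"] cong: if_cong)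
  qed
  show "sym_mat S"
    by (rule sym_matI) (simp add: Sx inner_sum_right mult.commute mult.left_commute inner_commute)
  show "x \<bullet> (S *v x) = (\<Sum>b\<in>B. g b * (b \<bullet> x)\<^sup>2)" for x
    by (simp add: Sx inner_sum_right inner_commute power2_eq_square mult.assoc)
qed

lemma pos_def_sqrt_exists:
  fixes A :: "real^'n^'n"
  assumes pd: "pos_def A"
  shows "\<exists>S. pos_def S \<and> S ** S = A"
proof -
  have "sym_mat A" using pd by (simp add: pos_def_def)
  then obtain B lam where fin: "finite B"
    and orth: "orthonormal B"
    and eig: "\<And>b. b \<in> B \<Longrightarrow> A *v b = lam b *\<^sub>R b" and span: "span B = UNIV"
    by (rule sym_mat_orthonormal_eigenbasis) blast
  have lam: "lam b > 0" if "b \<in> B" for b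
    using pos_def_eigenvalue_pos[OF pd eig[OF that]] orthonormalD[OF orth that that] by force
  define S where "S = matrix (\<lambda>x. \<Sum>b\<in>B. (sqrt (lam b) * (b \<bullet> x)) *\<^sub>R b)"
  note S = orthonormal_diagonal_matrix[OF fin orth S_def]
  have "(S ** S) *v b = A *v b" if b: "b \<in> B" for b
    using lam[OF b] by (simp add: matrix_vector_mul_assoc[symmetric] S(1)[OF b] eig[OF b]
        matrix_vector_mult_scaleR)
  then have "S ** S = A" by (rule matrix_eq_on_spanning_set[OF span])
  moreover have "x \<bullet> (S *v x) > 0" if x: "x \<noteq> 0" for x
  proof -
    obtain c where c: "c \<in> B" "c \<bullet> x \<noteq> 0"
      using orthonormal_spanning_inner_nonzero[OF fin orth span x] .
    show ?thesis
      unfolding S(3) using c lam by (intro sum_pos2[OF fin c(1)]) (auto simp: less_imp_le)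
  qed
  ultimately show ?thesis using S(2) unfolding pos_def_def by blast
qed

lemma pos_def_sqrt_unique:
  fixes S T :: "real^'n^'n"
  assumes S: "pos_def S" and T: "pos_def T" and eq: "S ** S = T ** T"
  shows "S = T"
proof -
  have "sym_mat T" using T by (simp add: pos_def_def)
  then obtain B \<mu> where "finite B"
    and orth: "orthonormal B"
    and eig: "\<And>b. b \<in> B \<Longrightarrow> T *v b = \<mu> b *\<^sub>R b" and span: "span B = UNIV"
    by (rule sym_mat_orthonormal_eigenbasis) blast
  have "S *v b = T *v b" if b: "b \<in> B" for b
  proof -
    have \<mu>: "\<mu> b > 0"
      using pos_def_eigenvalue_pos[OF T eig[OF b]] orthonormalD[OF orth b b] by force
    define w where "w = S *v b - \<mu> b *\<^sub>R b"
    \<comment> \<open>\<open>(S + \<mu>) w = (S\<^sup>2 - \<mu>\<^sup>2) b = 0\<close>, so \<open>w\<close> would be an eigenvector of \<open>S\<close> with eigenvalue \<open>-\<mu> < 0\<close>.\<close>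
    have "S *v (S *v b) = T *v (T *v b)" by (simp add: matrix_vector_mul_assoc eq)
    also have "\<dots> = (\<mu> b * \<mu> b) *\<^sub>R b" by (simp add: eig[OF b] matrix_vector_mult_scaleR)
    finally have "S *v w = - \<mu> b *\<^sub>R w"
      by (simp add: w_def matrix_vector_mult_diff_distrib matrix_vector_mult_scaleR algebra_simps)
    then have "w \<bullet> (S *v w) = - \<mu> b * (w \<bullet> w)" by simp
    then have "\<not> w \<bullet> (S *v w) > 0" using \<mu> inner_ge_zero[of w] by (simp add: not_less)
    then have "w = 0" using S unfolding pos_def_def by blast
    then show ?thesis by (simp add: w_def eig[OF b])
  qed
  then show ?thesis by (rule matrix_eq_on_spanning_set[OF span])
qed

lemma pos_def_mat_sqrt:
  fixes A :: "real^'n^'n"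
  assumes "pos_def A"
  shows "pos_def (mat_sqrt A)" and "mat_sqrt A ** mat_sqrt A = A"
proof -
  obtain S where S: "pos_def S" "S ** S = A" using pos_def_sqrt_exists[OF assms] by blast
  have "mat_sqrt A = S" unfolding mat_sqrt_def
    by (rule the_equality) (use S pos_def_sqrt_unique in auto)
  then show "pos_def (mat_sqrt A)" "mat_sqrt A ** mat_sqrt A = A" using S by simp_all
qed

lemma matrix_inv_unique:
  fixes A B :: "'a::field^'n^'n"
  assumes "A ** B = mat 1"
  shows "matrix_inv A = B"
proof -
  have "B ** A = mat 1" using assms matrix_left_right_inverse by blast
  then have "\<exists>A'. A ** A' = mat 1 \<and> A' ** A = mat 1" using assms by blast
  then have "matrix_inv A ** A = mat 1"
    unfolding matrix_inv_def by (rule someI2_ex) blast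
  then have "B = matrix_inv A ** (A ** B)" by (simp add: matrix_mul_assoc)
  then show ?thesis by (simp add: assms)
qed

lemma matrix_inv_right:
  fixes A :: "'a::field^'n^'n"
  assumes "invertible A"
  shows "A ** matrix_inv A = mat 1"
  using assms matrix_inv_unique unfolding invertible_right_inverse by metis

lemma matrix_inv_left:
  fixes A :: "'a::field^'n^'n"
  assumes "invertible A"
  shows "matrix_inv A ** A = mat 1"
  using matrix_inv_right[OF assms] matrix_left_right_inverse by blast

lemma pos_def_invertible:
  fixes S :: "real^'n^'n"
  assumes "pos_def S"
  shows "invertible S"
  using matrix_left_invertible_ker pos_def_mv_eq_0_iff[OF assms] invertible_left_inverse by blast

lemma sym_mat_matrix_inv:
  fixes S :: "real^'n^'n"
  assumes "sym_mat S" "invertible S"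
  shows "sym_mat (matrix_inv S)"
proof -
  have "S ** transpose (matrix_inv S) = transpose (matrix_inv S ** S)"
    using assms(1) by (simp add: matrix_transpose_mul sym_mat_def)
  also have "\<dots> = mat 1" by (simp add: matrix_inv_left[OF assms(2)])
  finally have "matrix_inv S = transpose (matrix_inv S)" by (rule matrix_inv_unique)
  then show ?thesis by (simp add: sym_mat_def)
qed

lemma wnorm_mul_self:
  fixes M :: "real^'n^'n"
  assumes "sym_mat M"
  shows "wnorm (M ** M) x = norm (M *v x)"
  using sym_mat_inner_mv[OF assms, of x "M *v x"]
  by (simp add: wnorm_def norm_eq_sqrt_inner matrix_vector_mul_assoc[symmetric])

lemma wnorm_eq_norm_mat_sqrt:
  fixes A :: "real^'n^'n"
  assumes "pos_def A"
  shows "wnorm A x = norm (mat_sqrt A *v x)"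
proof -
  have "sym_mat (mat_sqrt A)" using pos_def_mat_sqrt(1)[OF assms] by (simp add: pos_def_def)
  from wnorm_mul_self[OF this] show ?thesis by (simp add: pos_def_mat_sqrt(2)[OF assms])
qed

lemma wnorm_matrix_inv_eq_norm:
  fixes A :: "real^'n^'n"
  assumes "pos_def A"
  shows "wnorm (matrix_inv A) x = norm (matrix_inv (mat_sqrt A) *v x)"
proof -
  define S where "S = mat_sqrt A"
  have S: "pos_def S" "S ** S = A" using pos_def_mat_sqrt[OF assms] by (simp_all add: S_def)
  have inv: "invertible S" using pos_def_invertible[OF S(1)] .
  have "A ** (matrix_inv S ** matrix_inv S) = S ** (S ** matrix_inv S) ** matrix_inv S"
    by (simp add: S(2)[symmetric] matrix_mul_assoc)
  then have "A ** (matrix_inv S ** matrix_inv S) = mat 1" by (simp add: matrix_inv_right[OF inv])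
  then have "matrix_inv A = matrix_inv S ** matrix_inv S" by (rule matrix_inv_unique)
  moreover have "sym_mat (matrix_inv S)"
    using S(1) inv by (simp add: sym_mat_matrix_inv pos_def_def)
  ultimately show ?thesis by (simp add: wnorm_mul_self S_def)
qed

lemma inner_mv_eq_inner_mat_sqrt:
  fixes A :: "real^'n^'n"
  assumes "pos_def A"
  shows "u \<bullet> (A *v v) = (mat_sqrt A *v u) \<bullet> (mat_sqrt A *v v)"
  using sym_mat_inner_mv[of "mat_sqrt A" u "mat_sqrt A *v v"] pos_def_mat_sqrt[OF assms]
  by (simp add: pos_def_def matrix_vector_mul_assoc)

lemma abs_inner_le_wnorm_mult_wnorm_matrix_inv:
  fixes A :: "real^'n^'n"
  assumes "pos_def A"
  shows "\<bar>u \<bullet> x\<bar> \<le> wnorm A u * wnorm (matrix_inv A) x"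
proof -
  define S where "S = mat_sqrt A"
  have S: "pos_def S" using pos_def_mat_sqrt[OF assms] by (simp add: S_def)
  have "u \<bullet> x = u \<bullet> (S *v (matrix_inv S *v x))"
    by (simp add: matrix_vector_mul_assoc matrix_inv_right[OF pos_def_invertible[OF S]])
  also have "\<dots> = (S *v u) \<bullet> (matrix_inv S *v x)"
    using S by (simp add: sym_mat_inner_mv pos_def_def)
  finally show ?thesis
    by (simp add: wnorm_eq_norm_mat_sqrt[OF assms] wnorm_matrix_inv_eq_norm[OF assms] S_def
        Cauchy_Schwarz_ineq2)
qed

section \<open>Least squares under round-robin exploration\<close>

definition round_robin_axis :: "(nat \<Rightarrow> 'n) \<Rightarrow> nat \<Rightarrow> real^'n::finite" where
  "round_robin_axis enum t = axis (enum (t mod CARD('n))) 1"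

lemma sum_mod_cycles:
  fixes g :: "nat \<Rightarrow> 'b::comm_monoid_add"
  shows "(\<Sum>t<q * d. g (t mod d)) = (\<Sum>m<q. \<Sum>k<d. g k)"
proof -
  have "(\<Sum>t\<in>{m * d..<m * d + d}. g (t mod d)) = (\<Sum>k<d. g k)" for m
    using sum.shift_bounds_nat_ivl[of "\<lambda>t. g (t mod d)" 0 "m * d" d]
    by (simp add: add.commute atLeast0LessThan)
  then show ?thesis by (simp add: sum.nat_group[symmetric])
qed

lemma sum_round_robin:
  fixes f :: "'n::finite \<Rightarrow> 'b::comm_monoid_add"
  assumes "bij_betw enum {..<CARD('n)} UNIV"
  shows "(\<Sum>t<q * CARD('n). f (enum (t mod CARD('n)))) = (\<Sum>m<q. \<Sum>i\<in>UNIV. f i)"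
  using sum_mod_cycles[of "f \<circ> enum"] sum.reindex_bij_betw[OF assms, of f] by simp

lemma sum_matrix_mv: "(sum f T :: real^'n^'m) *v v = (\<Sum>t\<in>T. f t *v v)"
  by (simp add: matrix_vector_mult_def vec_eq_iff sum_component sum_distrib_right sum.swap[of _ T])

lemma outer_mv: "outer x *v v = (x \<bullet> v) *\<^sub>R x"
  by (simp add: outer_def matrix_vector_mult_def vec_eq_iff inner_vec_def sum_distrib_left
      mult.commute mult.left_commute)

lemma axis_expansion: "(\<Sum>i\<in>UNIV. (axis i 1 \<bullet> w) *\<^sub>R axis i (1::real)) = (w::real^'n)"
  by (simp add: inner_axis') (simp add: vec_eq_iff sum_component axis_def
      mult.commute[of _ "if _ then _ else _"] if_distrib cong: if_cong)

lemma ols_linear_model: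
  fixes x :: "nat \<Rightarrow> real^'n"
  assumes "invertible (\<Sum>t<N. outer (x t))"
  shows "ols N x (\<lambda>t. x t \<bullet> \<theta> + \<zeta> t)
    = \<theta> + matrix_inv (\<Sum>t<N. outer (x t)) *v (\<Sum>t<N. \<zeta> t *\<^sub>R x t)"
proof -
  define G where "G = (\<Sum>t<N. outer (x t))"
  have "(\<Sum>t<N. (x t \<bullet> \<theta> + \<zeta> t) *\<^sub>R x t) = G *v \<theta> + (\<Sum>t<N. \<zeta> t *\<^sub>R x t)"
    by (simp add: G_def scaleR_add_left sum.distrib sum_matrix_mv outer_mv)
  then show ?thesis
    using matrix_inv_left[OF assms]
    by (simp add: ols_def G_def[symmetric] matrix_vector_right_distrib matrix_vector_mul_assoc)
qed

lemma round_robin_gram: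
  fixes S :: "real^'n^'n"
  assumes sym: "sym_mat S" and bij: "bij_betw enum {..<CARD('n)} UNIV"
  shows "(\<Sum>t<q * CARD('n). outer (S *v round_robin_axis enum t)) = real q *\<^sub>R (S ** S)"
proof -
  have "(\<Sum>t<q * CARD('n). outer (S *v round_robin_axis enum t)) *v v = real q *\<^sub>R ((S ** S) *v v)" for v
  proof -
    have "(\<Sum>t<q * CARD('n). outer (S *v round_robin_axis enum t)) *v v
        = S *v (\<Sum>t<q * CARD('n). (round_robin_axis enum t \<bullet> (S *v v)) *\<^sub>R round_robin_axis enum t)"
      by (simp add: sum_matrix_mv outer_mv sym_mat_inner_mv[OF sym] matrix_vector_mult_scaleR
          linear_sum[OF matrix_vector_mul_linear] o_def)
    also have "(\<Sum>t<q * CARD('n). (round_robin_axis enum t \<bullet> (S *v v)) *\<^sub>R round_robin_axis enum t)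
        = (\<Sum>m<q. \<Sum>i\<in>UNIV. (axis i 1 \<bullet> (S *v v)) *\<^sub>R axis i 1)"
      unfolding round_robin_axis_def by (rule sum_round_robin[OF bij])
    also have "\<dots> = real q *\<^sub>R (S *v v)"
      by (simp only: axis_expansion sum_constant_scaleR) simp
    finally show ?thesis by (simp add: matrix_vector_mult_scaleR matrix_vector_mul_assoc)
  qed
  then show ?thesis by (simp add: matrix_eq scaleR_matrix_vector_assoc)
qed

lemma ols_round_robin:
  fixes S :: "real^'n^'n"
  assumes S: "pos_def S" and bij: "bij_betw enum {..<CARD('n)} UNIV" and q: "q > 0"
  shows "S *v ols (q * CARD('n)) (\<lambda>t. S *v round_robin_axis enum t)
      (\<lambda>t. (S *v round_robin_axis enum t) \<bullet> \<theta> + \<zeta> t)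
    = S *v \<theta> + (1 / real q) *\<^sub>R (\<Sum>t<q * CARD('n). \<zeta> t *\<^sub>R round_robin_axis enum t)"
proof -
  define Si where "Si = matrix_inv S"
  have Si: "S ** Si = mat 1" "Si ** S = mat 1"
    using matrix_inv_right matrix_inv_left pos_def_invertible[OF S] by (auto simp: Si_def)
  define G where "G = (\<Sum>t<q * CARD('n). outer (S *v round_robin_axis enum t))"
  have G: "G = real q *\<^sub>R (S ** S)"
    using round_robin_gram[OF _ bij] S by (simp add: G_def pos_def_def)
  have "G ** ((1 / real q) *\<^sub>R (Si ** Si)) = mat 1"
    using q by (simp add: G matrix_scalar_ac scalar_matrix_assoc[symmetric] matrix_mul_assoc
        matrix_mul_assoc[of S S, symmetric] Si)
  then have Ginv: "matrix_inv G = (1 / real q) *\<^sub>R (Si ** Si)" by (rule matrix_inv_unique)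
  have "invertible G" using \<open>G ** _ = mat 1\<close> invertible_right_inverse by blast
  then have "S *v ols (q * CARD('n)) (\<lambda>t. S *v round_robin_axis enum t)
      (\<lambda>t. (S *v round_robin_axis enum t) \<bullet> \<theta> + \<zeta> t)
    = S *v \<theta> + S *v (matrix_inv G *v (S *v (\<Sum>t<q * CARD('n). \<zeta> t *\<^sub>R round_robin_axis enum t)))"
    by (simp add: ols_linear_model G_def matrix_vector_right_distrib matrix_vector_mult_scaleR
        linear_sum[OF matrix_vector_mul_linear] o_def)
  also have "S *v (matrix_inv G *v (S *v v)) = (1 / real q) *\<^sub>R v" for v
  proof -
    have "matrix_inv G *v (S *v v) = (1 / real q) *\<^sub>R (Si *v ((Si ** S) *v v))"
      by (simp add: Ginv scaleR_matrix_vector_assoc[symmetric] scalar_matrix_assoc[symmetric]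
          matrix_vector_mul_assoc matrix_mul_assoc)
    then show ?thesis by (simp add: Si matrix_vector_mult_scaleR matrix_vector_mul_assoc)
  qed
  finally show ?thesis .
qed

section \<open>Regret of normalised directions\<close>

text \<open>The regret of \<open>x\<^sup>\<star>(\<theta>')\<close> in the whitened coordinates \<open>u = A\<^sup>1\<^sup>/\<^sup>2 \<theta>\<close>, \<open>v = A\<^sup>1\<^sup>/\<^sup>2 \<theta>'\<close>;
  \<open>c\<close> is the payoff of the fallback action \<open>x\<^sup>\<star>(0)\<close>.\<close>
definition normalized_regret :: "'a::real_inner \<Rightarrow> real \<Rightarrow> 'a \<Rightarrow> real" where
  "normalized_regret u c v = norm u - (if v = 0 then c else (u \<bullet> v) / norm v)"

lemma abs_normalized_regret_le:
  assumes "\<bar>c\<bar> \<le> norm u"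
  shows "\<bar>normalized_regret u c v\<bar> \<le> 2 * norm u"
proof -
  have "\<bar>if v = 0 then c else (u \<bullet> v) / norm v\<bar> \<le> norm u"
    using assms Cauchy_Schwarz_ineq2[of u v] by (simp add: abs_div divide_le_eq)
  then show ?thesis unfolding normalized_regret_def by linarith
qed

lemma normalized_regret_le_sq:
  assumes small: "norm \<xi> < norm u"
  shows "normalized_regret u c (u + \<xi>) \<le> (norm \<xi>)\<^sup>2 / norm u"
proof -
  define v where "v = u + \<xi>"
  define r m p where "r = norm u" and "m = norm v" and "p = u \<bullet> v"
  have r: "r > 0" using small norm_ge_zero[of \<xi>] unfolding r_def by linarith
  have xi: "(norm \<xi>)\<^sup>2 = m\<^sup>2 - 2 * p + r\<^sup>2"
    by (simp add: v_def m_def p_def r_def power2_norm_eq_inner inner_add_left inner_add_right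
        inner_commute)
  have "(norm \<xi>)\<^sup>2 < r\<^sup>2" using small by (simp add: r_def power_strict_mono)
  then have "m\<^sup>2 < 2 * p" using xi by simp
  then have p: "p > 0" by (smt (verit) zero_le_power2)
  then have "v \<noteq> 0" by (auto simp: p_def)
  then have m: "m > 0" by (simp add: m_def)
  \<comment> \<open>The claim is equivalent to \<open>p (2m - r) \<le> m\<^sup>3\<close>, which follows from \<open>p \<le> r m\<close>.\<close>
  have "p * (2 * m - r) \<le> m ^ 3"
  proof (cases "2 * m \<le> r")
    case False
    have "p \<le> r * m" unfolding p_def r_def m_def by (rule norm_cauchy_schwarz)
    then have "p * (2 * m - r) \<le> r * m * (2 * m - r)" using False by (simp add: mult_right_mono)
    also have "\<dots> = m ^ 3 - m * (m - r)\<^sup>2" by (simp add: power2_eq_square power3_eq_cube algebra_simps)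
    finally show ?thesis using m by (smt (verit) zero_le_power2 mult_nonneg_nonneg)
  next
    case True
    then have "p * (2 * m - r) \<le> 0" using p by (simp add: mult_nonneg_nonpos)
    moreover have "0 \<le> m ^ 3" using m by simp
    ultimately show ?thesis by linarith
  qed
  moreover have "(r - p / m) * (r * m) = r\<^sup>2 * m - p * r"
    using m by (simp add: field_simps power2_eq_square)
  ultimately have "(r - p / m) * (r * m) \<le> (m\<^sup>2 - 2 * p + r\<^sup>2) * m"
    by (simp add: power2_eq_square power3_eq_cube algebra_simps)
  then have "r - p / m \<le> (m\<^sup>2 - 2 * p + r\<^sup>2) / r"
    using r m by (simp add: pos_le_divide_eq mult.assoc[symmetric] mult_le_cancel_right_pos)
  then show ?thesis using \<open>v \<noteq> 0\<close> xi by (simp add: normalized_regret_def v_def r_def m_def p_def)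
qed

lemma normalized_regret_le:
  assumes "\<bar>c\<bar> \<le> norm u"
  shows "normalized_regret u c (u + \<xi>)
    \<le> (norm \<xi>)\<^sup>2 / norm u + (if norm u \<le> norm \<xi> then 2 * norm u else 0)"
proof (cases "norm \<xi> < norm u")
  case True
  then show ?thesis using normalized_regret_le_sq[OF True] by simp
next
  case False
  then show ?thesis
    using abs_normalized_regret_le[OF assms, of "u + \<xi>"] by (simp add: add_increasing)
qed

lemma inner_xstar_diff_eq_normalized_regret:
  fixes A :: "real^'n^'n"
  assumes A: "pos_def A" and "\<theta> \<noteq> 0"
  shows "\<theta> \<bullet> (xstar A x0 \<theta> - xstar A x0 v)
    = normalized_regret (mat_sqrt A *v \<theta>) (\<theta> \<bullet> x0) (mat_sqrt A *v v)"
proof -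
  have xstar: "\<theta> \<bullet> xstar A x0 v' = (if mat_sqrt A *v v' = 0 then \<theta> \<bullet> x0
      else (mat_sqrt A *v \<theta>) \<bullet> (mat_sqrt A *v v') / norm (mat_sqrt A *v v'))" for v'
    using pos_def_mv_eq_0_iff[OF pos_def_mat_sqrt(1)[OF A]]
    by (simp add: xstar_def inner_mv_eq_inner_mat_sqrt[OF A] wnorm_eq_norm_mat_sqrt[OF A])
  have "mat_sqrt A *v \<theta> \<noteq> 0"
    using assms pos_def_mv_eq_0_iff[OF pos_def_mat_sqrt(1)[OF A]] by simp
  then show ?thesis
    by (simp add: inner_diff_right xstar normalized_regret_def power2_norm_eq_inner[symmetric]
        power2_eq_square)
qed

lemma exp_negpart: "exp (negpart x) = min 1 (exp x)"
  by (simp add: negpart_def min_def)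

lemma expected_normalized_regret_le:
  fixes \<xi> :: "'a \<Rightarrow> 'b::euclidean_space"
  assumes "prob_space M" and \<xi>[measurable]: "\<xi> \<in> borel_measurable M" and c: "\<bar>c\<bar> \<le> norm u"
    and moment: "integrable M (\<lambda>w. (norm (\<xi> w))\<^sup>2)" "(\<integral>w. (norm (\<xi> w))\<^sup>2 \<partial>M) \<le> V"
    and tail: "measure M {w \<in> space M. norm u \<le> norm (\<xi> w)} \<le> p"
  shows "integrable M (\<lambda>w. normalized_regret u c (u + \<xi> w))
    \<and> (\<integral>w. normalized_regret u c (u + \<xi> w) \<partial>M) \<le> V / norm u + 2 * norm u * min 1 p"
proof -
  interpret prob_space M by fact
  define E where "E = {w \<in> space M. norm u \<le> norm (\<xi> w)}"
  have E[measurable]: "E \<in> sets M" unfolding E_def by measurable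
  have [measurable]: "(\<lambda>w. normalized_regret u c (u + \<xi> w)) \<in> borel_measurable M"
    unfolding normalized_regret_def by measurable
  have int: "integrable M (\<lambda>w. normalized_regret u c (u + \<xi> w))"
    using abs_normalized_regret_le[OF c] by (intro integrable_const_bound[of _ "2 * norm u"]) auto
  have intE: "integrable M (indicator E :: 'a \<Rightarrow> real)"
    using E by (simp add: integrable_real_indicator emeasure_eq_measure)
  then have int_bound: "integrable M (\<lambda>w. (norm (\<xi> w))\<^sup>2 / norm u + 2 * norm u * indicator E w)"
    using moment(1) by (intro Bochner_Integration.integrable_add integrable_divide integrable_mult_right) simp_all
  have "normalized_regret u c (u + \<xi> w) \<le> (norm (\<xi> w))\<^sup>2 / norm u + 2 * norm u * indicator E w"
    if "w \<in> space M" for w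
    using normalized_regret_le[OF c, of "\<xi> w"] that by (cases "norm u \<le> norm (\<xi> w)") (auto simp: E_def)
  then have "(\<integral>w. normalized_regret u c (u + \<xi> w) \<partial>M)
      \<le> (\<integral>w. (norm (\<xi> w))\<^sup>2 / norm u + 2 * norm u * indicator E w \<partial>M)"
    by (intro integral_mono[OF int int_bound])
  also have "\<dots> = (\<integral>w. (norm (\<xi> w))\<^sup>2 \<partial>M) / norm u + 2 * norm u * measure M E"
    using moment(1) intE by (simp add: Bochner_Integration.integral_add integrable_mult_right)
  also have "\<dots> \<le> V / norm u + 2 * norm u * min 1 p"
    using moment(2) tail prob_le_1[of E] unfolding E_def
    by (intro add_mono divide_right_mono mult_left_mono) auto
  finally show ?thesis using int by blast
qed

section \<open>Independent sub-Gaussian noise\<close>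

lemma two_plus_square_le_exp_plus_exp_minus: "2 + x\<^sup>2 \<le> exp x + exp (- (x::real))"
proof -
  have s: "(\<lambda>n. if even n then x ^ n /\<^sub>R fact n else 0) sums cosh x" by (rule cosh_converges)
  have "(\<Sum>n<3. if even n then x ^ n /\<^sub>R fact n else 0) \<le> (\<Sum>n. if even n then x ^ n /\<^sub>R fact n else 0)"
    by (rule sum_le_suminf) (use s in \<open>auto simp: sums_iff zero_le_even_power\<close>)
  also have "\<dots> = cosh x" using s by (simp add: sums_iff)
  finally have "1 + x\<^sup>2 / 2 \<le> cosh x" by (simp add: eval_nat_numeral)
  then show ?thesis by (simp add: cosh_field_def)
qed

lemma exp_minus_one_le_mult_exp: "exp x - 1 \<le> x * exp (x::real)"
proof -
  have "(1 - x) * exp x \<le> exp (- x) * exp x"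
    using exp_ge_add_one_self[of "- x"] by (simp add: mult_right_mono)
  then show ?thesis by (simp add: exp_minus_inverse algebra_simps)
qed

lemma subgaussian_second_moment_le_exp:
  fixes Z :: "'a \<Rightarrow> real"
  assumes "prob_space M" and sg: "subgaussian M s2 Z" and [measurable]: "Z \<in> borel_measurable M"
    and l: "l > 0"
  shows "integrable M (\<lambda>w. (Z w)\<^sup>2) \<and> (\<integral>w. (Z w)\<^sup>2 \<partial>M) \<le> s2 * exp (l\<^sup>2 * s2 / 2)"
proof -
  interpret prob_space M by fact
  have int_exp: "integrable M (\<lambda>w. exp (a * Z w))" for a using sg by (simp add: subgaussian_def)
  have mgf: "(\<integral>w. exp (a * Z w) \<partial>M) \<le> exp (a\<^sup>2 * s2 / 2)" for a using sg by (simp add: subgaussian_def)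
  define g where "g w = (exp (l * Z w) + exp ((- l) * Z w) - 2) / l\<^sup>2" for w
  have int_g: "integrable M g"
    unfolding g_def using int_exp[of l] int_exp[of "- l"] by (intro integrable_divide integrable_diff) auto
  have le_g: "(Z w)\<^sup>2 \<le> g w" for w
    using two_plus_square_le_exp_plus_exp_minus[of "l * Z w"] l
    by (simp add: g_def pos_le_divide_eq power_mult_distrib mult.commute)
  have int: "integrable M (\<lambda>w. (Z w)\<^sup>2)"
    using le_g by (intro Bochner_Integration.integrable_bound[OF int_g]) (auto intro!: AE_I2 order_trans[OF _ abs_ge_self])
  have "(\<integral>w. (Z w)\<^sup>2 \<partial>M) \<le> (\<integral>w. g w \<partial>M)" using le_g by (intro integral_mono[OF int int_g])
  also have "\<dots> = ((\<integral>w. exp (l * Z w) \<partial>M) + (\<integral>w. exp ((- l) * Z w) \<partial>M) - 2) / l\<^sup>2"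
    unfolding g_def using int_exp[of l] int_exp[of "- l"] by (simp add: prob_space)
  also have "\<dots> \<le> (2 * exp (l\<^sup>2 * s2 / 2) - 2) / l\<^sup>2"
    using mgf[of l] mgf[of "- l"] by (simp add: divide_right_mono)
  also have "\<dots> \<le> s2 * exp (l\<^sup>2 * s2 / 2)"
    using exp_minus_one_le_mult_exp[of "l\<^sup>2 * s2 / 2"] l by (simp add: pos_divide_le_eq algebra_simps)
  finally show ?thesis using int by simp
qed

lemma subgaussian_second_moment:
  fixes Z :: "'a \<Rightarrow> real"
  assumes "prob_space M" "subgaussian M s2 Z" "Z \<in> borel_measurable M"
  shows "integrable M (\<lambda>w. (Z w)\<^sup>2) \<and> (\<integral>w. (Z w)\<^sup>2 \<partial>M) \<le> s2"
proof
  show "integrable M (\<lambda>w. (Z w)\<^sup>2)"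
    using subgaussian_second_moment_le_exp[OF assms, of 1] by simp
  have "((\<lambda>l. s2 * exp (l\<^sup>2 * s2 / 2)) \<longlongrightarrow> s2 * exp (0\<^sup>2 * s2 / 2)) (at_right 0)"
    by (intro tendsto_intros) simp
  moreover have "\<forall>\<^sub>F l in at_right 0. (\<integral>w. (Z w)\<^sup>2 \<partial>M) \<le> s2 * exp (l\<^sup>2 * s2 / 2)"
    using subgaussian_second_moment_le_exp[OF assms] by (intro eventually_at_rightI[of 0 1]) auto
  ultimately show "(\<integral>w. (Z w)\<^sup>2 \<partial>M) \<le> s2"
    by (intro tendsto_lowerbound[where F = "at_right (0::real)"]) simp_all
qed

lemma nn_integral_normal_density: "\<sigma> > 0 \<Longrightarrow> (\<integral>\<^sup>+x. ennreal (normal_density \<mu> \<sigma> x) \<partial>lborel) = 1"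
  by (subst nn_integral_eq_integral) (auto simp: integral_normal_density)

lemma nn_integral_exp_mult_std_normal:
  "(\<integral>\<^sup>+g. ennreal (exp (b * g) * std_normal_density g) \<partial>lborel) = ennreal (exp (b\<^sup>2 / 2))"
proof -
  have "exp (b * g) * std_normal_density g = exp (b\<^sup>2 / 2) * normal_density b 1 g" for g
  proof -
    have "exp (b * g) * exp (- g\<^sup>2 / 2) = exp (b\<^sup>2 / 2) * exp (- (g - b)\<^sup>2 / 2)"
      by (simp add: exp_add[symmetric] power2_eq_square algebra_simps diff_divide_distrib add_divide_distrib)
    then show ?thesis by (simp add: std_normal_density_def normal_density_def)
  qed
  then have "(\<integral>\<^sup>+g. ennreal (exp (b * g) * std_normal_density g) \<partial>lborel)
      = ennreal (exp (b\<^sup>2 / 2)) * (\<integral>\<^sup>+g. ennreal (normal_density b 1 g) \<partial>lborel)"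
    by (simp add: ennreal_mult nn_integral_cmult)
  then show ?thesis by (simp add: nn_integral_normal_density)
qed

lemma nn_integral_exp_square_mult_std_normal:
  assumes "0 \<le> c" "c < 1 / 2"
  shows "(\<integral>\<^sup>+g. ennreal (exp (c * g\<^sup>2) * std_normal_density g) \<partial>lborel) = ennreal (1 / sqrt (1 - 2 * c))"
proof -
  define \<tau> where "\<tau> = 1 / sqrt (1 - 2 * c)"
  have pos: "1 - 2 * c > 0" using assms by simp
  have \<tau>: "\<tau> > 0" "\<tau>\<^sup>2 = 1 / (1 - 2 * c)" using pos by (simp_all add: \<tau>_def power_divide)
  have "exp (c * g\<^sup>2) * std_normal_density g = \<tau> * normal_density 0 \<tau> g" for g
  proof -
    have "exp (c * g\<^sup>2) * exp (- g\<^sup>2 / 2) = exp (- (g\<^sup>2) / (2 * \<tau>\<^sup>2))"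
      using pos by (simp add: exp_add[symmetric] \<tau>(2) field_simps)
    moreover have "sqrt (2 * pi * \<tau>\<^sup>2) = sqrt (2 * pi) * \<tau>" using \<tau>(1) by (simp add: real_sqrt_mult)
    ultimately show ?thesis using \<tau> by (simp add: std_normal_density_def normal_density_def field_simps)
  qed
  then have "(\<integral>\<^sup>+g. ennreal (exp (c * g\<^sup>2) * std_normal_density g) \<partial>lborel)
      = ennreal \<tau> * (\<integral>\<^sup>+g. ennreal (normal_density 0 \<tau> g) \<partial>lborel)"
    using \<tau> by (simp add: ennreal_mult nn_integral_cmult)
  then show ?thesis using \<tau> by (simp add: nn_integral_normal_density \<tau>_def)
qed

text \<open>Linearising the square with a Gaussian: \<open>e\<^bsup>\<beta>Y\<^sup>2\<^esup> = E\<^sub>g e\<^bsup>\<surd>(2\<beta>) Y g\<^esup>\<close> for standard normal \<open>g\<close>.\<close>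
lemma subgaussian_square_mgf:
  fixes Y :: "'a \<Rightarrow> real"
  assumes "prob_space M" and Y[measurable]: "Y \<in> borel_measurable M"
    and mgf: "\<And>\<mu>. (\<integral>\<^sup>+w. ennreal (exp (\<mu> * Y w)) \<partial>M) \<le> ennreal (exp (\<mu>\<^sup>2 * s2 / 2))"
    and "s2 \<ge> 0" "0 \<le> \<beta>" "2 * \<beta> * s2 < 1"
  shows "(\<integral>\<^sup>+w. ennreal (exp (\<beta> * (Y w)\<^sup>2)) \<partial>M) \<le> ennreal (1 / sqrt (1 - 2 * \<beta> * s2))"
proof -
  interpret prob_space M by fact
  interpret P: pair_sigma_finite M lborel
    by (intro pair_sigma_finite.intro) (simp_all add: sigma_finite_measure_axioms lborel.sigma_finite_measure_axioms)
  define a where "a = sqrt (2 * \<beta>)"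
  have a: "a\<^sup>2 = 2 * \<beta>" using assms by (simp add: a_def)
  have "(\<integral>\<^sup>+w. ennreal (exp (\<beta> * (Y w)\<^sup>2)) \<partial>M)
      = (\<integral>\<^sup>+w. (\<integral>\<^sup>+g. ennreal (exp ((a * Y w) * g) * std_normal_density g) \<partial>lborel) \<partial>M)"
    by (simp add: nn_integral_exp_mult_std_normal power_mult_distrib a)
  also have "\<dots> = (\<integral>\<^sup>+g. (\<integral>\<^sup>+w. ennreal (exp ((a * g) * Y w)) * ennreal (std_normal_density g) \<partial>M) \<partial>lborel)"
    by (subst P.Fubini'[symmetric]) (simp_all add: ennreal_mult mult_ac)
  also have "\<dots> \<le> (\<integral>\<^sup>+g. ennreal (exp ((\<beta> * s2) * g\<^sup>2) * std_normal_density g) \<partial>lborel)"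
  proof (rule nn_integral_mono)
    fix g
    have "(\<integral>\<^sup>+w. ennreal (exp ((a * g) * Y w)) * ennreal (std_normal_density g) \<partial>M)
        = (\<integral>\<^sup>+w. ennreal (exp ((a * g) * Y w)) \<partial>M) * ennreal (std_normal_density g)"
      by (rule nn_integral_multc) simp
    also have "\<dots> \<le> ennreal (exp ((a * g)\<^sup>2 * s2 / 2)) * ennreal (std_normal_density g)"
      by (rule mult_right_mono[OF mgf]) simp
    finally show "(\<integral>\<^sup>+w. ennreal (exp ((a * g) * Y w)) * ennreal (std_normal_density g) \<partial>M)
        \<le> ennreal (exp ((\<beta> * s2) * g\<^sup>2) * std_normal_density g)"
      by (simp add: ennreal_mult power_mult_distrib a mult_ac)
  qed
  also have "\<dots> = ennreal (1 / sqrt (1 - 2 * (\<beta> * s2)))"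
    by (rule nn_integral_exp_square_mult_std_normal) (use assms in auto)
  finally show ?thesis by (simp add: mult.assoc)
qed

lemma indep_subgaussian_sum_mgf:
  fixes z :: "'i \<Rightarrow> 'a \<Rightarrow> real"
  assumes "prob_space M" and ind: "prob_space.indep_vars M (\<lambda>_. borel) z T" and "finite T"
    and sg: "\<And>t. t \<in> T \<Longrightarrow> subgaussian M s2 (z t)"
  shows "(\<integral>\<^sup>+w. ennreal (exp (\<mu> * (\<Sum>t\<in>T. z t w))) \<partial>M) \<le> ennreal (exp (\<mu>\<^sup>2 * (real (card T) * s2) / 2))"
proof -
  interpret prob_space M by fact
  have "indep_vars (\<lambda>_. borel) (\<lambda>t w. ennreal (exp (\<mu> * z t w))) T"
    using indep_vars_compose2[OF ind, of "\<lambda>t x. ennreal (exp (\<mu> * x))" "\<lambda>_. borel"] by simp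
  then have "(\<integral>\<^sup>+w. (\<Prod>t\<in>T. ennreal (exp (\<mu> * z t w))) \<partial>M) = (\<Prod>t\<in>T. \<integral>\<^sup>+w. ennreal (exp (\<mu> * z t w)) \<partial>M)"
    by (rule indep_vars_nn_integral[OF \<open>finite T\<close>]) simp
  then have "(\<integral>\<^sup>+w. ennreal (exp (\<mu> * (\<Sum>t\<in>T. z t w))) \<partial>M) = (\<Prod>t\<in>T. \<integral>\<^sup>+w. ennreal (exp (\<mu> * z t w)) \<partial>M)"
    using \<open>finite T\<close> by (simp add: prod_ennreal sum_distrib_left exp_sum)
  also have "\<dots> \<le> (\<Prod>t\<in>T. ennreal (exp (\<mu>\<^sup>2 * s2 / 2)))"
  proof (rule prod_mono_ennreal)
    fix t assume "t \<in> T"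
    with sg show "(\<integral>\<^sup>+w. ennreal (exp (\<mu> * z t w)) \<partial>M) \<le> ennreal (exp (\<mu>\<^sup>2 * s2 / 2))"
      by (subst nn_integral_eq_integral) (auto simp: subgaussian_def)
  qed
  also have "\<dots> = ennreal (exp (\<mu>\<^sup>2 * (real (card T) * s2) / 2))"
    by (simp add: ennreal_power exp_of_nat_mult[symmetric] algebra_simps)
  finally show ?thesis .
qed

lemma indep_centered_product:
  fixes z :: "'i \<Rightarrow> 'a \<Rightarrow> real"
  assumes "prob_space M" and ind: "prob_space.indep_vars M (\<lambda>_. borel) z T" and "s \<in> T" "t \<in> T" "s \<noteq> t"
    and centered: "\<And>t. t \<in> T \<Longrightarrow> integrable M (z t) \<and> (\<integral>w. z t w \<partial>M) = 0"
  shows "integrable M (\<lambda>w. z s w * z t w) \<and> (\<integral>w. z s w * z t w \<partial>M) = 0"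
proof -
  interpret prob_space M by fact
  have ind2: "indep_vars (\<lambda>_. borel) z {s, t}" using indep_vars_subset[OF ind] assms(3,4) by auto
  have int: "\<And>i. i \<in> {s, t} \<Longrightarrow> integrable M (z i)" using centered assms(3,4) by auto
  have prod: "(\<Prod>i\<in>{s, t}. z i w) = z s w * z t w" for w using assms(5) by simp
  show ?thesis
    using indep_vars_integrable[OF _ ind2 int] indep_vars_lebesgue_integral[OF _ ind2 int]
      centered assms(3-5) by (simp add: prod)
qed

lemma indep_centered_sum_second_moment:
  fixes z :: "'i \<Rightarrow> 'a \<Rightarrow> real" and e :: "'i \<Rightarrow> 'b::real_inner"
  assumes "prob_space M" and ind: "prob_space.indep_vars M (\<lambda>_. borel) z T" and "finite T"
    and centered: "\<And>t. t \<in> T \<Longrightarrow> integrable M (z t) \<and> (\<integral>w. z t w \<partial>M) = 0"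
    and square: "\<And>t. t \<in> T \<Longrightarrow> integrable M (\<lambda>w. (z t w)\<^sup>2)"
  shows "integrable M (\<lambda>w. (norm (\<Sum>t\<in>T. z t w *\<^sub>R e t))\<^sup>2)
    \<and> (\<integral>w. (norm (\<Sum>t\<in>T. z t w *\<^sub>R e t))\<^sup>2 \<partial>M) = (\<Sum>t\<in>T. (\<integral>w. (z t w)\<^sup>2 \<partial>M) * (norm (e t))\<^sup>2)"
proof -
  interpret prob_space M by fact
  define c where "c s t = e s \<bullet> e t" for s t
  have expand: "(norm (\<Sum>t\<in>T. z t w *\<^sub>R e t))\<^sup>2 = (\<Sum>s\<in>T. \<Sum>t\<in>T. c t s * (z s w * z t w))" for w
    by (simp add: power2_norm_eq_inner inner_sum_left inner_sum_right c_def mult_ac sum_distrib_left)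
  have summand: "integrable M (\<lambda>w. c t s * (z s w * z t w))
      \<and> (\<integral>w. c t s * (z s w * z t w) \<partial>M) = (if s = t then (\<integral>w. (z t w)\<^sup>2 \<partial>M) * (norm (e t))\<^sup>2 else 0)"
    if "s \<in> T" "t \<in> T" for s t
  proof (cases "s = t")
    case True
    then show ?thesis using square[OF that(2)]
      by (simp add: c_def power2_eq_square power2_norm_eq_inner[symmetric] mult.commute)
  next
    case False
    then show ?thesis using indep_centered_product[OF prob_space_axioms ind that False centered] by simp
  qed
  have "(\<integral>w. (\<Sum>s\<in>T. \<Sum>t\<in>T. c t s * (z s w * z t w)) \<partial>M)
      = (\<Sum>s\<in>T. \<Sum>t\<in>T. if s = t then (\<integral>w. (z t w)\<^sup>2 \<partial>M) * (norm (e t))\<^sup>2 else 0)"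
    using summand by (simp add: Bochner_Integration.integral_sum Bochner_Integration.integrable_sum)
  then show ?thesis
    using summand \<open>finite T\<close> by (simp add: expand Bochner_Integration.integrable_sum)
qed

lemma indep_vars_block_sums:
  fixes z :: "'i \<Rightarrow> 'a \<Rightarrow> real"
  assumes "prob_space M" and ind: "prob_space.indep_vars M (\<lambda>_. borel) z I"
    and "\<And>j. j \<in> J \<Longrightarrow> B j \<subseteq> I" and "disjoint_family_on B J"
  shows "prob_space.indep_vars M (\<lambda>_. borel) (\<lambda>j w. \<Sum>t\<in>B j. z t w) J"
proof -
  interpret prob_space M by fact
  have "indep_vars (\<lambda>j. PiM (B j) (\<lambda>_. borel)) (\<lambda>j w. restrict (\<lambda>t. z t w) (B j)) J"
    using indep_vars_restrict[OF ind] assms(3,4) by blast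
  moreover have "(\<lambda>f. \<Sum>t\<in>B j. f t) \<in> PiM (B j) (\<lambda>_. borel) \<rightarrow>\<^sub>M (borel :: real measure)" for j
    by measurable
  ultimately have "indep_vars (\<lambda>_. borel) (\<lambda>j w. \<Sum>t\<in>B j. restrict (\<lambda>t. z t w) (B j) t) J"
    by (rule indep_vars_compose2)
  then show ?thesis by simp
qed

lemma emeasure_ge_le_exp_mult_nn_integral:
  fixes X :: "'a \<Rightarrow> real"
  assumes [measurable]: "X \<in> borel_measurable M" and "\<beta> \<ge> 0"
  shows "emeasure M {w \<in> space M. a \<le> X w}
    \<le> ennreal (exp (- \<beta> * a)) * (\<integral>\<^sup>+w. ennreal (exp (\<beta> * X w)) \<partial>M)"
proof -
  have "emeasure M {w \<in> space M. a \<le> X w} = (\<integral>\<^sup>+w. indicator {w \<in> space M. a \<le> X w} w \<partial>M)"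
    by simp
  also have "\<dots> \<le> (\<integral>\<^sup>+w. ennreal (exp (- \<beta> * a)) * ennreal (exp (\<beta> * X w)) \<partial>M)"
  proof (rule nn_integral_mono)
    fix w
    have "a \<le> X w \<Longrightarrow> 1 \<le> exp (- \<beta> * a) * exp (\<beta> * X w)"
      using assms(2) by (simp add: exp_add[symmetric] mult_left_mono algebra_simps)
    then show "indicator {w \<in> space M. a \<le> X w} w \<le> ennreal (exp (- \<beta> * a)) * ennreal (exp (\<beta> * X w))"
      by (auto simp: indicator_def ennreal_mult[symmetric] ennreal_leI simp del: ennreal_1 intro: ennreal_leI[of 1, simplified])
  qed
  also have "\<dots> = ennreal (exp (- \<beta> * a)) * (\<integral>\<^sup>+w. ennreal (exp (\<beta> * X w)) \<partial>M)"
    by (rule nn_integral_cmult) simp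
  finally show ?thesis .
qed

lemma sqrt_3_le_exp_two_thirds: "sqrt 3 \<le> exp (2 / 3 :: real)"
proof -
  have "3 \<le> exp (4 / 3 :: real)"
    using exp_lower_Taylor_quadratic[of "4 / 3 :: real"] by (simp add: power2_eq_square)
  also have "exp (4 / 3 :: real) = (exp (2 / 3))\<^sup>2" by (simp add: exp_double[symmetric])
  finally show ?thesis by (simp add: real_le_lsqrt)
qed

lemma indep_subgaussian_average_square_mgf:
  fixes z :: "'i \<Rightarrow> 'a \<Rightarrow> real" and \<sigma> :: real
  assumes "prob_space M" and ind: "prob_space.indep_vars M (\<lambda>_. borel) z B"
    and B: "finite B" "B \<noteq> {}" and \<sigma>: "\<sigma> > 0"
    and z: "\<And>t. t \<in> B \<Longrightarrow> z t \<in> borel_measurable M" "\<And>t. t \<in> B \<Longrightarrow> subgaussian M (\<sigma>\<^sup>2) (z t)"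
  shows "(\<integral>\<^sup>+w. ennreal (exp (card B / (3 * \<sigma>\<^sup>2) * ((\<Sum>t\<in>B. z t w) / card B)\<^sup>2)) \<partial>M) \<le> ennreal (sqrt 3)"
proof -
  define n where "n = real (card B)"
  have n: "n > 0" using B by (simp add: n_def card_gt_0_iff)
  have "(\<integral>\<^sup>+w. ennreal (exp (\<mu> * ((\<Sum>t\<in>B. z t w) / n))) \<partial>M) \<le> ennreal (exp (\<mu>\<^sup>2 * (\<sigma>\<^sup>2 / n) / 2))" for \<mu>
    using indep_subgaussian_sum_mgf[OF assms(1) ind B(1) z(2), of "\<mu> / n"] n
    by (simp add: n_def[symmetric] power2_eq_square field_simps)
  then have "(\<integral>\<^sup>+w. ennreal (exp (n / (3 * \<sigma>\<^sup>2) * ((\<Sum>t\<in>B. z t w) / n)\<^sup>2)) \<partial>M)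
      \<le> ennreal (1 / sqrt (1 - 2 * (n / (3 * \<sigma>\<^sup>2)) * (\<sigma>\<^sup>2 / n)))"
    using n \<sigma> z(1) by (intro subgaussian_square_mgf[OF assms(1)]) auto
  also have "2 * (n / (3 * \<sigma>\<^sup>2)) * (\<sigma>\<^sup>2 / n) = 2 / 3" using n \<sigma> by simp
  finally show ?thesis by (simp add: n_def real_sqrt_divide)
qed

section \<open>Round-robin noise\<close>

lemma norm_power2_eq_sum_components: "(norm (x::real^'n))\<^sup>2 = (\<Sum>i\<in>UNIV. (x $ i)\<^sup>2)"
proof -
  have "(norm x)\<^sup>2 = (\<Sum>i\<in>UNIV. x $ i * x $ i)"
    unfolding power2_norm_eq_inner by (simp add: inner_vec_def)
  then show ?thesis by (simp add: power2_eq_square)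
qed

lemma round_robin_noise_component:
  fixes enum :: "nat \<Rightarrow> 'n::finite"
  shows "(\<Sum>t<N. \<zeta> t *\<^sub>R round_robin_axis enum t) $ i = (\<Sum>t\<in>{t\<in>{..<N}. enum (t mod CARD('n)) = i}. \<zeta> t)"
proof -
  have "(\<Sum>t<N. \<zeta> t *\<^sub>R round_robin_axis enum t) $ i = (\<Sum>t<N. if enum (t mod CARD('n)) = i then \<zeta> t else 0)"
    by (simp add: round_robin_axis_def sum_component axis_def eq_commute[of i] cong: if_cong)
      (intro sum.cong, auto)
  also have "\<dots> = (\<Sum>t\<in>{t\<in>{..<N}. enum (t mod CARD('n)) = i}. \<zeta> t)"
    by (rule sum.inter_filter[symmetric]) simp
  finally show ?thesis .
qed

lemma card_round_robin_block:
  fixes enum :: "nat \<Rightarrow> 'n::finite"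
  assumes "bij_betw enum {..<CARD('n)} UNIV"
  shows "card {t\<in>{..<q * CARD('n)}. enum (t mod CARD('n)) = i} = q"
proof -
  have "card {t\<in>{..<q * CARD('n)}. enum (t mod CARD('n)) = i}
      = (\<Sum>t<q * CARD('n). if enum (t mod CARD('n)) = i then 1 else 0)"
    by (simp add: sum.inter_filter[symmetric])
  also have "\<dots> = (\<Sum>m<q. \<Sum>j\<in>UNIV. if j = i then 1 else (0::nat))"
    by (rule sum_round_robin[OF assms, of "\<lambda>j. if j = i then 1 else 0"])
  finally show ?thesis by simp
qed

lemma round_robin_noise_second_moment:
  fixes z :: "nat \<Rightarrow> 'a \<Rightarrow> real" and enum :: "nat \<Rightarrow> 'n::finite" and \<sigma> :: real
  assumes "prob_space M" and ind: "prob_space.indep_vars M (\<lambda>_. borel) z {..<N}"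
    and z: "\<And>t. t < N \<Longrightarrow> z t \<in> borel_measurable M"
      "\<And>t. t < N \<Longrightarrow> integrable M (z t) \<and> (\<integral>w. z t w \<partial>M) = 0"
      "\<And>t. t < N \<Longrightarrow> subgaussian M (\<sigma>\<^sup>2) (z t)"
  shows "integrable M (\<lambda>w. (norm (\<Sum>t<N. z t w *\<^sub>R round_robin_axis enum t))\<^sup>2)
    \<and> (\<integral>w. (norm (\<Sum>t<N. z t w *\<^sub>R round_robin_axis enum t))\<^sup>2 \<partial>M) \<le> real N * \<sigma>\<^sup>2"
proof -
  have square: "integrable M (\<lambda>w. (z t w)\<^sup>2) \<and> (\<integral>w. (z t w)\<^sup>2 \<partial>M) \<le> \<sigma>\<^sup>2" if "t < N" for t
    using subgaussian_second_moment[OF assms(1) z(3)[OF that] z(1)[OF that]] .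
  have "(\<Sum>t<N. (\<integral>w. (z t w)\<^sup>2 \<partial>M) * (norm (round_robin_axis enum t))\<^sup>2) \<le> (\<Sum>t<N. \<sigma>\<^sup>2)"
    using square by (intro sum_mono) (simp add: round_robin_axis_def)
  then show ?thesis
    using indep_centered_sum_second_moment[OF assms(1) ind _ _ , of "round_robin_axis enum"] z(2) square
    by simp
qed

lemma indep_block_averages_tail:
  fixes z :: "'i \<Rightarrow> 'a \<Rightarrow> real" and B :: "'j::finite \<Rightarrow> 'i set" and \<sigma> :: real
  assumes "prob_space M" and ind: "prob_space.indep_vars M (\<lambda>_. borel) z I"
    and B: "\<And>j. B j \<subseteq> I" "disjoint_family B" "\<And>j. finite (B j)" "\<And>j. card (B j) = q" and q: "q > 0"
    and z: "\<And>t. t \<in> I \<Longrightarrow> z t \<in> borel_measurable M" "\<And>t. t \<in> I \<Longrightarrow> subgaussian M (\<sigma>\<^sup>2) (z t)"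
    and \<sigma>: "\<sigma> > 0"
  shows "measure M {w \<in> space M. a \<le> (\<Sum>j\<in>UNIV. ((\<Sum>t\<in>B j. z t w) / q)\<^sup>2)}
    \<le> exp (2 * real CARD('j) / 3 - q * a / (3 * \<sigma>\<^sup>2))"
proof -
  interpret prob_space M by fact
  define Y where "Y j w = (\<Sum>t\<in>B j. z t w) / q" for j w
  define \<beta> where "\<beta> = q / (3 * \<sigma>\<^sup>2)"
  have [measurable]: "Y j \<in> borel_measurable M" for j
    unfolding Y_def using z(1) B(1)
    by (intro borel_measurable_divide borel_measurable_sum borel_measurable_const) auto
  have block: "(\<integral>\<^sup>+w. ennreal (exp (\<beta> * (Y j w)\<^sup>2)) \<partial>M) \<le> ennreal (sqrt 3)" for j
  proof -
    have "B j \<noteq> {}" using B(4) q by (metis card.empty less_irrefl)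
    then show ?thesis
      using indep_subgaussian_average_square_mgf[OF prob_space_axioms indep_vars_subset[OF ind B(1)] B(3)
          _ \<sigma>, of j] z B(1,4) by (auto simp: Y_def \<beta>_def)
  qed
  have "indep_vars (\<lambda>_. borel) (\<lambda>j w. \<Sum>t\<in>B j. z t w) UNIV"
    using B by (intro indep_vars_block_sums[OF prob_space_axioms ind]) auto
  then have "indep_vars (\<lambda>_. borel) (\<lambda>j w. ennreal (exp (\<beta> * (Y j w)\<^sup>2))) UNIV"
    unfolding Y_def by (rule indep_vars_compose2[where X = "\<lambda>j w. \<Sum>t\<in>B j. z t w"]) simp
  then have "(\<integral>\<^sup>+w. ennreal (exp (\<beta> * (\<Sum>j\<in>UNIV. (Y j w)\<^sup>2))) \<partial>M)
      = (\<Prod>j\<in>UNIV. \<integral>\<^sup>+w. ennreal (exp (\<beta> * (Y j w)\<^sup>2)) \<partial>M)"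
    by (simp add: sum_distrib_left exp_sum prod_ennreal[symmetric] indep_vars_nn_integral)
  also have "\<dots> \<le> (\<Prod>j\<in>(UNIV :: 'j set). ennreal (sqrt 3))"
    by (rule prod_mono_ennreal) (rule block)
  also have "\<dots> \<le> ennreal (exp (2 / 3) ^ CARD('j))"
    using sqrt_3_le_exp_two_thirds by (simp add: ennreal_power power_mono)
  finally have mgf: "(\<integral>\<^sup>+w. ennreal (exp (\<beta> * (\<Sum>j\<in>UNIV. (Y j w)\<^sup>2))) \<partial>M) \<le> ennreal (exp (2 / 3) ^ CARD('j))" .
  have "emeasure M {w \<in> space M. a \<le> (\<Sum>j\<in>UNIV. (Y j w)\<^sup>2)}
      \<le> ennreal (exp (- \<beta> * a)) * (\<integral>\<^sup>+w. ennreal (exp (\<beta> * (\<Sum>j\<in>UNIV. (Y j w)\<^sup>2))) \<partial>M)"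
    using \<sigma> by (intro emeasure_ge_le_exp_mult_nn_integral) (auto simp: \<beta>_def)
  also have "\<dots> \<le> ennreal (exp (- \<beta> * a)) * ennreal (exp (2 / 3) ^ CARD('j))"
    by (rule mult_left_mono[OF mgf]) simp
  also have "\<dots> = ennreal (exp (2 * real CARD('j) / 3 - q * a / (3 * \<sigma>\<^sup>2)))"
    by (simp add: ennreal_mult[symmetric] \<beta>_def exp_of_nat_mult[symmetric] exp_add[symmetric] algebra_simps)
  finally show ?thesis by (simp add: emeasure_eq_measure Y_def)
qed

lemma round_robin_noise_tail:
  fixes z :: "nat \<Rightarrow> 'a \<Rightarrow> real" and enum :: "nat \<Rightarrow> 'n::finite" and \<sigma> :: real
  assumes "prob_space M" and ind: "prob_space.indep_vars M (\<lambda>_. borel) z {..<q * CARD('n)}"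
    and z: "\<And>t. t < q * CARD('n) \<Longrightarrow> z t \<in> borel_measurable M"
      "\<And>t. t < q * CARD('n) \<Longrightarrow> subgaussian M (\<sigma>\<^sup>2) (z t)"
    and \<sigma>: "\<sigma> > 0" and bij: "bij_betw enum {..<CARD('n)} UNIV" and q: "q > 0" and r: "r \<ge> 0"
  shows "measure M {w \<in> space M. r \<le> norm ((1 / real q) *\<^sub>R (\<Sum>t<q * CARD('n). z t w *\<^sub>R round_robin_axis enum t))}
    \<le> exp (2 * real CARD('n) / 3 - q * r\<^sup>2 / (3 * \<sigma>\<^sup>2))"
proof -
  define Blk where "Blk i = {t\<in>{..<q * CARD('n)}. enum (t mod CARD('n)) = i}" for i
  define \<xi> where "\<xi> w = (1 / real q) *\<^sub>R (\<Sum>t<q * CARD('n). z t w *\<^sub>R round_robin_axis enum t)" for w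
  have "(norm (\<xi> w))\<^sup>2 = (\<Sum>i\<in>UNIV. ((\<Sum>t\<in>Blk i. z t w) / q)\<^sup>2)" for w
    unfolding \<xi>_def norm_power2_eq_sum_components vector_scaleR_component round_robin_noise_component
    by (simp add: Blk_def divide_inverse mult.commute)
  moreover have "r \<le> norm (\<xi> w) \<longleftrightarrow> r\<^sup>2 \<le> (norm (\<xi> w))\<^sup>2" for w
    using r by (metis abs_le_square_iff abs_of_nonneg norm_ge_zero)
  ultimately have "{w \<in> space M. r \<le> norm (\<xi> w)} = {w \<in> space M. r\<^sup>2 \<le> (\<Sum>i\<in>UNIV. ((\<Sum>t\<in>Blk i. z t w) / q)\<^sup>2)}"
    by simp
  moreover have "measure M {w \<in> space M. r\<^sup>2 \<le> (\<Sum>i\<in>UNIV. ((\<Sum>t\<in>Blk i. z t w) / q)\<^sup>2)}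
      \<le> exp (2 * real CARD('n) / 3 - q * r\<^sup>2 / (3 * \<sigma>\<^sup>2))"
    using card_round_robin_block[OF bij] z
    by (intro indep_block_averages_tail[OF assms(1) ind _ _ _ _ q _ _ \<sigma>])
      (auto simp: Blk_def disjoint_family_on_def)
  ultimately show ?thesis by (simp add: \<xi>_def)
qed

lemma expected_normalized_regret_round_robin:
  fixes z :: "nat \<Rightarrow> 'a \<Rightarrow> real" and enum :: "nat \<Rightarrow> 'n::finite" and u :: "real^'n" and \<sigma> :: real
  assumes "prob_space M" and ind: "prob_space.indep_vars M (\<lambda>_. borel) z {..<q * CARD('n)}"
    and z: "\<And>t. t < q * CARD('n) \<Longrightarrow> z t \<in> borel_measurable M"
      "\<And>t. t < q * CARD('n) \<Longrightarrow> integrable M (z t) \<and> (\<integral>w. z t w \<partial>M) = 0"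
      "\<And>t. t < q * CARD('n) \<Longrightarrow> subgaussian M (\<sigma>\<^sup>2) (z t)"
    and \<sigma>: "\<sigma> > 0" and bij: "bij_betw enum {..<CARD('n)} UNIV" and q: "q > 0" and c: "\<bar>c\<bar> \<le> norm u"
  defines "\<xi> \<equiv> \<lambda>w. (1 / real q) *\<^sub>R (\<Sum>t<q * CARD('n). z t w *\<^sub>R round_robin_axis enum t)"
  shows "integrable M (\<lambda>w. normalized_regret u c (u + \<xi> w))
    \<and> (\<integral>w. normalized_regret u c (u + \<xi> w) \<partial>M)
      \<le> CARD('n) * \<sigma>\<^sup>2 / (q * norm u) + 2 * norm u * exp (negpart (2 * real CARD('n) / 3 - q * (norm u)\<^sup>2 / (3 * \<sigma>\<^sup>2)))"
proof -
  have moment: "integrable M (\<lambda>w. (norm (\<xi> w))\<^sup>2)"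
      "(\<integral>w. (norm (\<xi> w))\<^sup>2 \<partial>M) \<le> real (q * CARD('n)) * \<sigma>\<^sup>2 / (real q)\<^sup>2"
    using round_robin_noise_second_moment[OF assms(1) ind z, of enum]
    by (simp_all add: \<xi>_def power_divide divide_right_mono)
  have tail: "measure M {w \<in> space M. norm u \<le> norm (\<xi> w)}
      \<le> exp (2 * real CARD('n) / 3 - q * (norm u)\<^sup>2 / (3 * \<sigma>\<^sup>2))"
    using round_robin_noise_tail[OF assms(1) ind z(1,3) \<sigma> bij q] by (simp add: \<xi>_def)
  have "\<xi> \<in> borel_measurable M" unfolding \<xi>_def using z(1) by measurable
  from expected_normalized_regret_le[OF assms(1) this c moment tail]
  show ?thesis using q by (simp add: exp_negpart power2_eq_square)
qed

theorem lemma2: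
  fixes M :: "'a measure"
    and A :: "real^'n^'n" and \<theta> x0 :: "real^'n"
    and \<sigma> :: real and Ne :: nat
    and enum :: "nat \<Rightarrow> 'n"
    and z :: "nat \<Rightarrow> 'a \<Rightarrow> real"
  assumes "prob_space M"
    and "\<sigma> > 0"
    and "pos_def A"
    and "\<theta> \<noteq> 0"
    and "Ne > 0" and "CARD('n) dvd Ne"
    and "bij_betw enum {..<CARD('n)} UNIV"
    and "prob_space.indep_vars M (\<lambda>_. borel) z {..<Ne}"
    and "\<And>t. t < Ne \<Longrightarrow> z t \<in> borel_measurable M"
    and "\<And>t. t < Ne \<Longrightarrow> integrable M (z t) \<and> (\<integral>w. z t w \<partial>M) = 0"
    and "\<And>t. t < Ne \<Longrightarrow> subgaussian M (\<sigma>\<^sup>2) (z t)"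
    and "wnorm (matrix_inv A) x0 \<le> 1"
  defines "x \<equiv> (\<lambda>t. mat_sqrt A *v axis (enum (t mod CARD('n))) 1)"
    and "y \<equiv> (\<lambda>w t. (mat_sqrt A *v axis (enum (t mod CARD('n))) 1) \<bullet> \<theta> + z t w)"
    and "d \<equiv> real CARD('n)"
  shows "integrable M (\<lambda>w. \<theta> \<bullet> (xstar A x0 \<theta> - xstar A x0 (ols Ne x (y w))))
    \<and> (\<integral>w. \<theta> \<bullet> (xstar A x0 \<theta> - xstar A x0 (ols Ne x (y w))) \<partial>M)
      \<le> d\<^sup>2 * \<sigma>\<^sup>2 / (wnorm A \<theta> * real Ne)
        + 2 * wnorm A \<theta> * exp (negpart (2 * d / 3 - real Ne * (wnorm A \<theta>)\<^sup>2 / (3 * \<sigma>\<^sup>2 * d)))"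
proof -
  obtain q where Ne: "Ne = q * CARD('n)" using \<open>CARD('n) dvd Ne\<close> by (auto simp: mult.commute)
  have q: "q > 0" using Ne \<open>Ne > 0\<close> by simp
  define u where "u = mat_sqrt A *v \<theta>"
  have u: "wnorm A \<theta> = norm u" by (simp add: u_def wnorm_eq_norm_mat_sqrt assms)
  have regret: "\<theta> \<bullet> (xstar A x0 \<theta> - xstar A x0 (ols Ne x (y w)))
      = normalized_regret u (\<theta> \<bullet> x0) (u + (1 / real q) *\<^sub>R (\<Sum>t<Ne. z t w *\<^sub>R round_robin_axis enum t))" for w
    using ols_round_robin[OF pos_def_mat_sqrt(1) \<open>bij_betw enum _ _\<close> q, of A \<theta> "\<lambda>t. z t w"] assms(3)
    by (simp add: inner_xstar_diff_eq_normalized_regret assms x_def y_def u_def Ne round_robin_axis_def)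
  have "\<bar>\<theta> \<bullet> x0\<bar> \<le> norm u"
    using abs_inner_le_wnorm_mult_wnorm_matrix_inv[OF \<open>pos_def A\<close>, of \<theta> x0] assms(12) u
    by (smt (verit) mult_left_le norm_ge_zero)
  then have "integrable M (\<lambda>w. \<theta> \<bullet> (xstar A x0 \<theta> - xstar A x0 (ols Ne x (y w))))
    \<and> (\<integral>w. \<theta> \<bullet> (xstar A x0 \<theta> - xstar A x0 (ols Ne x (y w))) \<partial>M)
      \<le> d * \<sigma>\<^sup>2 / (q * norm u) + 2 * norm u * exp (negpart (2 * d / 3 - q * (norm u)\<^sup>2 / (3 * \<sigma>\<^sup>2)))"
    unfolding regret d_def using assms(8-11) unfolding Ne
    by (intro expected_normalized_regret_round_robin[OF assms(1) _ _ _ _ \<open>\<sigma> > 0\<close> \<open>bij_betw enum _ _\<close> q]) auto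
  moreover have "d * \<sigma>\<^sup>2 / (q * norm u) = d\<^sup>2 * \<sigma>\<^sup>2 / (norm u * Ne)"
    and "q * (norm u)\<^sup>2 / (3 * \<sigma>\<^sup>2) = Ne * (norm u)\<^sup>2 / (3 * \<sigma>\<^sup>2 * d)"
    using q by (simp_all add: Ne d_def power2_eq_square)
  ultimately show ?thesis by (simp add: u)
qed

end
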